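(* Let $N=\{1,\dots,n\}$ with $n\ge2$, let $A=\{a_1,\dots,a_k\}$ be finite and $u_1,\dots,u_n:A\to\mathbb{R}$ arbitrary. In the $P^{n-1}\&C$ game defined in the context, (i) every subgame-perfect Nash equilibrium has an outcome $a$ that is efficient, i.e. $\sum_{i=1}^n u_i(a)=\max_{b\in A}\sum_{i=1}^n u_i(b)$, and (ii) every efficient option is the outcome of some subgame-perfect Nash equilibrium.
   Context: Players have quasi-linear utilities $u_i(a)+t_i$. Let $P=\{p\in\mathbb{R}^k:\sum_j p_j=0\}$. The $P^{n-1}\&C$ game: player 1 chooses $p^2\in P$; then for $i=2,\dots,n-1$ in order, player $i$, having observed $p^2,\dots,p^i$, chooses $p^{i+1}\in P$; finally player $n$, having observed $p^2,\dots,p^n$, chooses an option $a\in A$ (the outcome). Then player $n$ pays $p^n(a)$ to player $n-1$, and each player $m\in\{2,\dots,n-1\}$ pays $p^m(a)$ to player $m-1$ while receiving $p^{m+1}(a)$ from player $m+1$. Payoffs: $g_1=u_1(a)+p^2(a)$; $g_m=u_m(a)-p^m(a)+p^{m+1}(a)$ for $2\le m\le n-1$; $g_n=u_n(a)-p^n(a)$. A pure strategy for player $i<n$ maps each history $(p^2,\dots,p^i)$ to an element of $P$; for player $n$ it maps each $(p^2,\dots,p^n)$ to an element of $A$. A subgame-perfect Nash equilibrium is a strategy profile whose restriction to every subgame is a Nash equilibrium of that subgame; its outcome is the option chosen on the path of play. *)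

theory Defs
  imports Complex_Main
begin

definition Pset :: "'a set \<Rightarrow> ('a \<Rightarrow> real) set" where
  "Pset A = {p. (\<forall>x. x \<notin> A \<longrightarrow> p x = 0) \<and> sum p A = 0}"

text \<open>A history is the list [p^2, ..., p^m] of announcements made so far.
  A profile consists of s (s i h = announcement p^(i+1) of player i, 1 <= i <= n-1,
  at history h of length i-1) and t (choice of player n at a history of length n-1).\<close>

type_synonym 'a hist = "('a \<Rightarrow> real) list"

definition valid_msgs :: "nat \<Rightarrow> 'a set \<Rightarrow> (nat \<Rightarrow> 'a hist \<Rightarrow> ('a \<Rightarrow> real)) \<Rightarrow> bool" where
  "valid_msgs n A s \<longleftrightarrow>
     (\<forall>i\<in>{1..n-1}. \<forall>h. length h = i - 1 \<and> set h \<subseteq> Pset A \<longrightarrow> s i h \<in> Pset A)"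

definition valid_choice :: "nat \<Rightarrow> 'a set \<Rightarrow> ('a hist \<Rightarrow> 'a) \<Rightarrow> bool" where
  "valid_choice n A t \<longleftrightarrow> (\<forall>h. length h = n - 1 \<and> set h \<subseteq> Pset A \<longrightarrow> t h \<in> A)"

fun play :: "(nat \<Rightarrow> 'a hist \<Rightarrow> ('a \<Rightarrow> real)) \<Rightarrow> nat \<Rightarrow> 'a hist \<Rightarrow> 'a hist" where
  "play s 0 h = h"
| "play s (Suc k) h = play s k (h @ [s (Suc (length h)) h])"

definition terminal :: "nat \<Rightarrow> (nat \<Rightarrow> 'a hist \<Rightarrow> ('a \<Rightarrow> real)) \<Rightarrow> 'a hist \<Rightarrow> 'a hist" where
  "terminal n s h = play s (n - 1 - length h) h"

definition outcome :: "nat \<Rightarrow> (nat \<Rightarrow> 'a hist \<Rightarrow> ('a \<Rightarrow> real)) \<Rightarrow> ('a hist \<Rightarrow> 'a) \<Rightarrow> 'a hist \<Rightarrow> 'a" where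
  "outcome n s t h = t (terminal n s h)"

text \<open>Payoff of player i in the subgame starting at history h. In the terminal history H,
  p^m = H ! (m - 2).\<close>
definition payoff :: "nat \<Rightarrow> (nat \<Rightarrow> 'a \<Rightarrow> real) \<Rightarrow> (nat \<Rightarrow> 'a hist \<Rightarrow> ('a \<Rightarrow> real))
    \<Rightarrow> ('a hist \<Rightarrow> 'a) \<Rightarrow> 'a hist \<Rightarrow> nat \<Rightarrow> real" where
  "payoff n u s t h i =
     (let H = terminal n s h; a = t H in
      if i = 1 then u 1 a + (H ! 0) a
      else if i = n then u n a - (H ! (n - 2)) a
      else u i a - (H ! (i - 2)) a + (H ! (i - 1)) a)"

definition nodes :: "nat \<Rightarrow> 'a set \<Rightarrow> 'a hist set" where
  "nodes n A = {h. length h \<le> n - 1 \<and> set h \<subseteq> Pset A}"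

definition SPNE :: "nat \<Rightarrow> 'a set \<Rightarrow> (nat \<Rightarrow> 'a \<Rightarrow> real)
    \<Rightarrow> (nat \<Rightarrow> 'a hist \<Rightarrow> ('a \<Rightarrow> real)) \<Rightarrow> ('a hist \<Rightarrow> 'a) \<Rightarrow> bool" where
  "SPNE n A u s t \<longleftrightarrow> valid_msgs n A s \<and> valid_choice n A t \<and>
     (\<forall>h\<in>nodes n A.
        (\<forall>i\<in>{1..n-1}. \<forall>\<sigma>. valid_msgs n A (s(i := \<sigma>)) \<longrightarrow>
            payoff n u (s(i := \<sigma>)) t h i \<le> payoff n u s t h i) \<and>
        (\<forall>t'. valid_choice n A t' \<longrightarrow> payoff n u s t' h n \<le> payoff n u s t h n))"

definition efficient :: "nat \<Rightarrow> 'a set \<Rightarrow> (nat \<Rightarrow> 'a \<Rightarrow> real) \<Rightarrow> 'a \<Rightarrow> bool" where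
  "efficient n A u a \<longleftrightarrow> a \<in> A \<and>
     (\<Sum>i=1..n. u i a) = (MAX b\<in>A. \<Sum>i=1..n. u i b)"

end

theory Submission
  imports Defs
begin

text \<open>Write T_j for the joint payoff of players j, ..., n; the transfers among them cancel, so
  T_j = u_j + ... + u_n - p^j, T_1 is total welfare, and player j receives T_j - T_(j+1).
  By backward induction the outcome of an equilibrium subgame in which player j moves maximizes
  T_j: the continuation outcome maximizes T_(j+1) = U - p^(j+1), whose maximum is at least the
  average of U since p^(j+1) sums to zero, and a suitable announcement makes any option the
  continuation outcome at a price arbitrarily close to that average. At the root this is
  efficiency. Conversely, if every player announces the centred payoff of the later coalition,
  every T_j with j \<ge> 2 is constant on the path, so a chooser who maximizes T_n, T_(n-1), ...,
  T_1 lexicographically and otherwise prefers a given efficient option selects it. A deviation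
  q of player j leads to an option maximizing T_(j+1) = U - q, which costs player j at least
  the average of U, exactly what she pays on the path.\<close>

section \<open>Plays and terminal histories\<close>

lemma length_play [simp]: "length (play s k h) = length h + k"
  by (induction k arbitrary: h) auto

lemma play_add: "play s (k + l) h = play s l (play s k h)"
  by (induction k arbitrary: h) auto

lemma play_eq_append: "\<exists>ys. play s k h = h @ ys"
proof (induction k arbitrary: h)
  case 0
  show ?case by simp
next
  case (Suc k)
  then obtain ys where "play s k (h @ [s (Suc (length h)) h]) = (h @ [s (Suc (length h)) h]) @ ys"
    by blast
  then show ?case by auto
qed

lemma nth_play:
  "length h \<le> i \<Longrightarrow> i < length h + k \<Longrightarrow> play s k h ! i = s (Suc i) (take i (play s k h))"
proof (induction k arbitrary: h)
  case 0
  then show ?case by simp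
next
  case (Suc k)
  define h1 where "h1 = h @ [s (Suc (length h)) h]"
  obtain ys where ys: "play s k h1 = h1 @ ys"
    using play_eq_append by blast
  have step: "play s (Suc k) h = h1 @ ys"
    using ys by (simp add: h1_def)
  show ?case
  proof (cases "i = length h")
    case True
    then show ?thesis unfolding step by (simp add: h1_def nth_append)
  next
    case False
    then show ?thesis using Suc.IH[of h1] Suc.prems by (simp add: h1_def)
  qed
qed

lemma play_cong:
  "(\<And>j. length h < j \<Longrightarrow> j \<le> length h + k \<Longrightarrow> s' j = s j) \<Longrightarrow> play s' k h = play s k h"
proof (induction k arbitrary: h)
  case 0
  show ?case by simp
next
  case (Suc k)
  have "play s' k (h @ [s (Suc (length h)) h]) = play s k (h @ [s (Suc (length h)) h])"
    by (rule Suc.IH) (use Suc.prems in auto)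
  then show ?case using Suc.prems[of "Suc (length h)"] by simp
qed

lemma set_play_subset_Pset:
  "valid_msgs n A s \<Longrightarrow> set h \<subseteq> Pset A \<Longrightarrow> length h + k \<le> n - 1 \<Longrightarrow> set (play s k h) \<subseteq> Pset A"
proof (induction k arbitrary: h)
  case 0
  then show ?case by simp
next
  case (Suc k)
  then have "s (Suc (length h)) h \<in> Pset A"
    unfolding valid_msgs_def by auto
  then show ?case using Suc.IH[of "h @ [s (Suc (length h)) h]"] Suc.prems by auto
qed

lemma terminal_eq_append: "\<exists>ys. terminal n s h = h @ ys"
  unfolding terminal_def by (rule play_eq_append)

lemma terminal_play:
  assumes "length h + k \<le> n - 1"
  shows "terminal n s (play s k h) = terminal n s h"
proof -
  have "n - 1 - length h = k + (n - 1 - length (play s k h))"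
    using assms by simp
  then show ?thesis
    unfolding terminal_def by (simp only: play_add)
qed

lemma terminal_snoc:
  "length h < n - 1 \<Longrightarrow> terminal n s (h @ [s (Suc (length h)) h]) = terminal n s h"
  using terminal_play[of h 1 n s] by simp

lemma terminal_cong:
  "(\<And>j. length h < j \<Longrightarrow> j \<le> n - 1 \<Longrightarrow> s' j = s j) \<Longrightarrow> terminal n s' h = terminal n s h"
  unfolding terminal_def by (rule play_cong) auto

lemma terminal_fun_upd_past: "i \<le> length h \<Longrightarrow> terminal n (s(i := \<sigma>)) h = terminal n s h"
  by (rule terminal_cong) auto

lemma terminal_fun_upd_future:
  fixes s :: "nat \<Rightarrow> 'a hist \<Rightarrow> ('a \<Rightarrow> real)"
  assumes "length h < i" "i \<le> n - 1"
  defines "h' \<equiv> play s (i - 1 - length h) h"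
  shows "terminal n (s(i := \<sigma>)) h = terminal n s (h' @ [\<sigma> h'])"
proof -
  let ?k = "i - 1 - length h"
  have h': "play (s(i := \<sigma>)) ?k h = h'"
    unfolding h'_def by (rule play_cong) (use assms in auto)
  have i: "Suc (length h') = i"
    using assms by (simp add: h'_def)
  have "terminal n (s(i := \<sigma>)) h = terminal n (s(i := \<sigma>)) h'"
    using terminal_play[of h ?k n "s(i := \<sigma>)"] h' assms by simp
  also have "\<dots> = terminal n (s(i := \<sigma>)) (h' @ [\<sigma> h'])"
    using terminal_snoc[of h' n "s(i := \<sigma>)"] i assms by simp
  also have "\<dots> = terminal n s (h' @ [\<sigma> h'])"
    by (rule terminal_cong) (use i in auto)
  finally show ?thesis .
qed

lemma payoff_cong: "terminal n s h = terminal n s' h' \<Longrightarrow> payoff n u s t h i = payoff n u s' t h' i"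
  by (simp add: payoff_def)

section \<open>Joint payoffs of the later players\<close>

text \<open>The payoff T_j of players j, ..., n, with p^1 = p^(n+1) = 0 (player 1 pays nothing,
  nobody pays player n); p^j is the entry H ! (j - 2) of a history.\<close>

definition tail_payoff :: "nat \<Rightarrow> (nat \<Rightarrow> 'a \<Rightarrow> real) \<Rightarrow> 'a hist \<Rightarrow> nat \<Rightarrow> 'a \<Rightarrow> real" where
  "tail_payoff n u H j x = (\<Sum>l=j..n. u l x) - (if 2 \<le> j \<and> j \<le> n then (H ! (j - 2)) x else 0)"

lemma tail_payoff_one: "tail_payoff n u H 1 = (\<lambda>x. \<Sum>l=1..n. u l x)"
  by (simp add: tail_payoff_def fun_eq_iff)

lemma tail_payoff_Suc_n: "tail_payoff n u H (Suc n) x = 0"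
  by (simp add: tail_payoff_def)

lemma tail_payoff_append: "j \<le> length h + 1 \<Longrightarrow> tail_payoff n u (h @ ys) j = tail_payoff n u h j"
  by (auto simp: tail_payoff_def nth_append fun_eq_iff)

lemma tail_payoff_terminal:
  "j \<le> length h + 1 \<Longrightarrow> tail_payoff n u (terminal n s h) j = tail_payoff n u h j"
  using terminal_eq_append[of n s h] tail_payoff_append by metis

lemma tail_payoff_snoc:
  "length h + 2 = j \<Longrightarrow> j \<le> n \<Longrightarrow> tail_payoff n u (h @ [q]) j = (\<lambda>x. (\<Sum>l=j..n. u l x) - q x)"
  by (auto simp: tail_payoff_def nth_append fun_eq_iff)

lemma payoff_eq_tail_payoff_diff:
  assumes "2 \<le> n" "1 \<le> i" "i \<le> n"
  shows "payoff n u s t h i = tail_payoff n u (terminal n s h) i (outcome n s t h)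
           - tail_payoff n u (terminal n s h) (Suc i) (outcome n s t h)"
proof -
  have "(\<Sum>l=i..n. u l x) = u i x + (\<Sum>l=Suc i..n. u l x)" for x
    using assms(3) by (simp add: sum.atLeast_Suc_atMost)
  then show ?thesis
    using assms by (auto simp: payoff_def tail_payoff_def outcome_def Let_def numeral_2_eq_2 Suc_diff_Suc)
qed

lemma payoff_after_announcement:
  assumes "Suc (length h) = i" "i < n"
  shows "payoff n u s t (h @ [q]) i = tail_payoff n u h i (outcome n s t (h @ [q]))
           - ((\<Sum>l=Suc i..n. u l (outcome n s t (h @ [q]))) - q (outcome n s t (h @ [q])))"
  using payoff_eq_tail_payoff_diff[of n i u s t "h @ [q]"] assms
    tail_payoff_terminal[of i "h @ [q]" n u s] tail_payoff_terminal[of "Suc i" "h @ [q]" n u s]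
    tail_payoff_append[of i h n u "[q]"] tail_payoff_snoc[of h "Suc i" n u q]
  by simp

definition centered :: "'a set \<Rightarrow> ('a \<Rightarrow> real) \<Rightarrow> 'a \<Rightarrow> real" where
  "centered A f x = (if x \<in> A then f x - sum f A / real (card A) else 0)"

lemma centered_in_Pset: "centered A f \<in> Pset A"
proof (cases "finite A \<and> A \<noteq> {}")
  case True
  then have "sum (centered A f) A = sum f A - real (card A) * (sum f A / real (card A))"
    by (simp add: centered_def sum_subtractf)
  then show ?thesis
    using True by (simp add: Pset_def centered_def)
next
  case False
  then show ?thesis by (auto simp: Pset_def centered_def)
qed

lemma sum_diff_Pset: "q \<in> Pset A \<Longrightarrow> (\<Sum>x\<in>A. f x - q x) = sum f A"
  by (simp add: Pset_def sum_subtractf)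

lemma Pset_maximizer_above_average:
  assumes "finite A" "q \<in> Pset A" "a \<in> A" "\<forall>x\<in>A. f x - q x \<le> f a - q a"
  shows "sum f A \<le> real (card A) * (f a - q a)"
  using sum_bounded_above[of A "\<lambda>x. f x - q x" "f a - q a"] assms sum_diff_Pset[of q A f] by simp

section \<open>Lexicographic maximization\<close>

definition maximizers :: "('a \<Rightarrow> real) \<Rightarrow> 'a set \<Rightarrow> 'a set" where
  "maximizers f S = {x \<in> S. \<forall>y\<in>S. f y \<le> f x}"

lemma maximizers_nonempty:
  assumes "finite S" "S \<noteq> {}"
  shows "maximizers f S \<noteq> {}"
proof -
  have "Max (f ` S) \<in> f ` S"
    using assms by simp
  then obtain x where "x \<in> S" "f x = Max (f ` S)"
    by (metis imageE)
  then have "x \<in> maximizers f S"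
    using assms(1) by (simp add: maximizers_def)
  then show ?thesis by blast
qed

fun lex_argmax :: "(nat \<Rightarrow> 'a \<Rightarrow> real) \<Rightarrow> 'a set \<Rightarrow> nat \<Rightarrow> 'a set" where
  "lex_argmax f S 0 = S"
| "lex_argmax f S (Suc d) = maximizers (f d) (lex_argmax f S d)"

lemma lex_argmax_antimono: "d \<le> d' \<Longrightarrow> lex_argmax f S d' \<subseteq> lex_argmax f S d"
  by (rule lift_Suc_antimono_le[of "lex_argmax f S"]) (auto simp: maximizers_def)

lemma lex_argmax_nonempty: "finite S \<Longrightarrow> S \<noteq> {} \<Longrightarrow> lex_argmax f S d \<noteq> {}"
proof (induction d)
  case 0
  then show ?case by simp
next
  case (Suc d)
  have "finite (lex_argmax f S d)"
    using lex_argmax_antimono[of 0 d f S] Suc.prems(1) finite_subset by auto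
  then show ?case using Suc by (simp add: maximizers_nonempty)
qed

lemma lex_argmax_Suc_eq_maximizers:
  assumes const: "\<And>d x y. d < k \<Longrightarrow> x \<in> S \<Longrightarrow> y \<in> S \<Longrightarrow> f d x = f d y"
  shows "lex_argmax f S (Suc k) = maximizers (f k) S"
proof -
  have "lex_argmax f S d = S" if "d \<le> k" for d
    using that
  proof (induction d)
    case (Suc d)
    have "\<forall>x\<in>S. \<forall>y\<in>S. f d y \<le> f d x"
      using const[of d] Suc.prems by (metis Suc_le_lessD order_refl)
    then show ?case using Suc by (auto simp: maximizers_def)
  qed simp
  then show ?thesis
    by simp
qed

section \<open>Outcomes of subgame-perfect equilibria are efficient\<close>

text \<open>Announcing the centred version of U - e [b] forces the outcome b at a cost
  of at most the average of U plus e, while any announcement costs at least that average.\<close>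

lemma optimal_announcement_maximizes:
  fixes U V :: "'a \<Rightarrow> real" and c :: "('a \<Rightarrow> real) \<Rightarrow> 'a"
  assumes fin: "finite A" and p: "p \<in> Pset A" and b: "b \<in> A"
    and follow: "\<And>q. q \<in> Pset A \<Longrightarrow> c q \<in> maximizers (\<lambda>x. U x - q x) A"
    and optimal: "\<And>q. q \<in> Pset A \<Longrightarrow> V (c q) - (U (c q) - q (c q)) \<le> V (c p) - (U (c p) - p (c p))"
  shows "V b \<le> V (c p)"
proof (rule field_le_epsilon)
  fix e :: real
  assume e: "0 < e"
  have k: "real (card A) > 0"
    using fin b card_gt_0_iff by fastforce
  define g where "g x = U x - (if x = b then e else 0)" for x
  define K where "K = sum g A / real (card A)"
  define q where "q = centered A g"
  have q: "q \<in> Pset A"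
    unfolding q_def by (rule centered_in_Pset)
  have Uq: "U x - q x = (if x = b then e else 0) + K" if "x \<in> A" for x
    using that by (simp add: q_def centered_def g_def K_def)
  have "c q \<in> A" "U b - q b \<le> U (c q) - q (c q)"
    using follow[OF q] b by (auto simp: maximizers_def)
  then have cq: "c q = b"
    using Uq[of b] Uq[of "c q"] b e by (auto split: if_splits)
  have "sum U A \<le> real (card A) * (U (c p) - p (c p))"
    using follow[OF p] by (intro Pset_maximizer_above_average[OF fin p]) (auto simp: maximizers_def)
  moreover have "sum g A = sum U A - e"
    using fin b by (simp add: g_def sum_subtractf)
  ultimately have "K \<le> U (c p) - p (c p)"
    using k e by (simp add: K_def divide_le_eq mult.commute)
  moreover have "V b - (e + K) \<le> V (c p) - (U (c p) - p (c p))"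
    using optimal[OF q] cq Uq[OF b] by simp
  ultimately show "V b \<le> V (c p) + e"
    by linarith
qed

lemma SPNE_outcome_maximizes_tail_payoff:
  assumes spne: "SPNE n A u s t" and n: "2 \<le> n" and fin: "finite A"
  shows "h \<in> nodes n A \<Longrightarrow> outcome n s t h \<in> maximizers (tail_payoff n u h (Suc (length h))) A"
proof (induction "n - 1 - length h" arbitrary: h)
  case 0
  then have len: "length h = n - 1" and hP: "set h \<subseteq> Pset A"
    by (auto simp: nodes_def)
  have terminal: "terminal n s' h = h" for s'
    using len by (simp add: terminal_def)
  have vc: "valid_choice n A t"
    using spne by (simp add: SPNE_def)
  have payoff: "payoff n u s t' h n = tail_payoff n u h n (t' h)" for t'
    using payoff_eq_tail_payoff_diff[of n n u s t' h] n
    by (simp add: terminal outcome_def tail_payoff_Suc_n)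
  have "tail_payoff n u h n b \<le> tail_payoff n u h n (t h)" if b: "b \<in> A" for b
  proof -
    have "valid_choice n A (t(h := b))"
      using vc b by (simp add: valid_choice_def)
    then have "payoff n u s (t(h := b)) h n \<le> payoff n u s t h n"
      using spne "0.prems" unfolding SPNE_def by blast
    then show ?thesis
      using payoff[of t] payoff[of "t(h := b)"] by simp
  qed
  moreover have "t h \<in> A"
    using vc len hP by (simp add: valid_choice_def)
  ultimately show ?case
    using len n by (simp add: outcome_def terminal maximizers_def)
next
  case (Suc d)
  define i where "i = Suc (length h)"
  have i: "i < n" "i \<in> {1..n-1}" and hP: "set h \<subseteq> Pset A"
    using Suc.hyps(2) Suc.prems by (auto simp: i_def nodes_def)
  have vs: "valid_msgs n A s"
    using spne by (simp add: SPNE_def)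
  define c where "c q = outcome n s t (h @ [q])" for q
  have follow: "c q \<in> maximizers (\<lambda>x. (\<Sum>l=Suc i..n. u l x) - q x) A" if q: "q \<in> Pset A" for q
  proof -
    have "d = n - 1 - length (h @ [q])" "h @ [q] \<in> nodes n A"
      using Suc.hyps(2) Suc.prems q i by (auto simp: nodes_def i_def)
    moreover have "tail_payoff n u (h @ [q]) (Suc i) = (\<lambda>x. (\<Sum>l=Suc i..n. u l x) - q x)"
      using tail_payoff_snoc[of h "Suc i" n u q] i by (simp add: i_def fun_eq_iff)
    ultimately show ?thesis
      using Suc.hyps(1)[of "h @ [q]"] by (simp add: c_def i_def)
  qed
  have deviation: "payoff n u (s(i := \<sigma>)) t h i = payoff n u s t (h @ [\<sigma> h]) i" for \<sigma>
    using terminal_fun_upd_future[of h i n s \<sigma>] i by (intro payoff_cong) (simp add: i_def)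
  have p: "s i h \<in> Pset A"
    using vs hP i by (simp add: valid_msgs_def i_def)
  have "outcome n s t h \<in> maximizers (tail_payoff n u h i) A"
    unfolding maximizers_def
  proof (intro CollectI conjI ballI)
    have c_p: "c (s i h) = outcome n s t h"
      using terminal_snoc[of h n s] i by (simp add: c_def i_def outcome_def)
    show "outcome n s t h \<in> A"
      using follow[OF p] c_p by (simp add: maximizers_def)
    fix b assume b: "b \<in> A"
    have "tail_payoff n u h i b \<le> tail_payoff n u h i (c (s i h))"
    proof (rule optimal_announcement_maximizes[OF fin p b follow])
      fix q assume q: "q \<in> Pset A"
      have "valid_msgs n A (s(i := (s i)(h := q)))"
        using vs q by (simp add: valid_msgs_def)
      then have "payoff n u (s(i := (s i)(h := q))) t h i \<le> payoff n u s t h i"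
        using spne Suc.prems i by (simp add: SPNE_def)
      then show "tail_payoff n u h i (c q) - ((\<Sum>l=Suc i..n. u l (c q)) - q (c q))
          \<le> tail_payoff n u h i (c (s i h)) - ((\<Sum>l=Suc i..n. u l (c (s i h))) - s i h (c (s i h)))"
        using deviation[of "(s i)(h := q)"] deviation[of "s i"] i
          payoff_after_announcement[of h i n u s t] by (simp add: c_def i_def)
    qed
    then show "tail_payoff n u h i b \<le> tail_payoff n u h i (outcome n s t h)"
      using c_p by simp
  qed
  then show ?case
    by (simp add: i_def)
qed

section \<open>Every efficient option is an equilibrium outcome\<close>

definition balancing_msgs :: "nat \<Rightarrow> (nat \<Rightarrow> 'a \<Rightarrow> real) \<Rightarrow> 'a set \<Rightarrow> nat \<Rightarrow> 'a hist \<Rightarrow> ('a \<Rightarrow> real)" where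
  "balancing_msgs n u A i h = centered A (\<lambda>x. \<Sum>l=Suc i..n. u l x)"

text \<open>Criterion d is the joint payoff T_(n-d), so ties in T_n are broken by T_(n-1), and so on,
  and finally in favour of a.\<close>

definition lex_choice :: "nat \<Rightarrow> (nat \<Rightarrow> 'a \<Rightarrow> real) \<Rightarrow> 'a set \<Rightarrow> 'a \<Rightarrow> 'a hist \<Rightarrow> 'a" where
  "lex_choice n u A a H =
     (let L = lex_argmax (\<lambda>d. tail_payoff n u H (n - d)) A n in if a \<in> L then a else (SOME x. x \<in> L))"

lemma valid_msgs_balancing_msgs: "valid_msgs n A (balancing_msgs n u A)"
  by (simp add: valid_msgs_def balancing_msgs_def centered_in_Pset)

lemma lex_choice_in_lex_argmax:
  "finite A \<Longrightarrow> A \<noteq> {} \<Longrightarrow> lex_choice n u A a H \<in> lex_argmax (\<lambda>d. tail_payoff n u H (n - d)) A n"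
  using lex_argmax_nonempty[of A] by (simp add: lex_choice_def Let_def some_in_eq)

lemma valid_choice_lex_choice: "finite A \<Longrightarrow> A \<noteq> {} \<Longrightarrow> valid_choice n A (lex_choice n u A a)"
  using lex_choice_in_lex_argmax lex_argmax_antimono[of 0 n] by (fastforce simp: valid_choice_def)

lemma tail_payoff_terminal_balancing_msgs:
  assumes "length h + 2 \<le> j" "j \<le> n" "x \<in> A"
  shows "tail_payoff n u (terminal n (balancing_msgs n u A) h) j x
           = (\<Sum>y\<in>A. \<Sum>l=j..n. u l y) / real (card A)"
proof -
  have "terminal n (balancing_msgs n u A) h ! (j - 2) = centered A (\<lambda>x. \<Sum>l=j..n. u l x)"
    using nth_play[of h "j - 2" "n - 1 - length h" "balancing_msgs n u A"] assms
    by (simp add: terminal_def balancing_msgs_def numeral_2_eq_2 Suc_diff_Suc)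
  then show ?thesis
    using assms by (simp add: tail_payoff_def centered_def)
qed

lemma balancing_outcome_maximizes_tail_payoff:
  assumes fin: "finite A" and ne: "A \<noteq> {}" and h: "length h < n"
  shows "outcome n (balancing_msgs n u A) (lex_choice n u A a) h
           \<in> maximizers (tail_payoff n u h (Suc (length h))) A"
proof -
  define H where "H = terminal n (balancing_msgs n u A) h"
  define f where "f = (\<lambda>d. tail_payoff n u H (n - d))"
  have "lex_choice n u A a H \<in> lex_argmax f A n"
    unfolding f_def by (rule lex_choice_in_lex_argmax[OF fin ne])
  also have "\<dots> \<subseteq> lex_argmax f A (Suc (n - Suc (length h)))"
    using h by (intro lex_argmax_antimono) simp
  also have "\<dots> = maximizers (f (n - Suc (length h))) A"
  proof (rule lex_argmax_Suc_eq_maximizers)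
    fix d x y assume "d < n - Suc (length h)" "x \<in> A" "y \<in> A"
    moreover have "length h + 2 \<le> n - d"
      using \<open>d < n - Suc (length h)\<close> by arith
    ultimately show "f d x = f d y"
      by (simp add: f_def H_def tail_payoff_terminal_balancing_msgs)
  qed
  also have "\<dots> = maximizers (tail_payoff n u h (Suc (length h))) A"
    using h tail_payoff_terminal[of "Suc (length h)" h n u] by (simp add: f_def H_def Suc_diff_Suc)
  finally show ?thesis
    by (simp add: outcome_def H_def)
qed

lemma balancing_outcome_Nil:
  assumes fin: "finite A" and "efficient n A u a"
  shows "outcome n (balancing_msgs n u A) (lex_choice n u A a) [] = a"
proof -
  have a: "a \<in> A" "\<forall>b\<in>A. (\<Sum>l=1..n. u l b) \<le> (\<Sum>l=1..n. u l a)"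
    using assms by (auto simp: efficient_def intro: Max_ge)
  define H where "H = terminal n (balancing_msgs n u A) []"
  define f where "f = (\<lambda>d. tail_payoff n u H (n - d))"
  show ?thesis
  proof (cases n)
    case (Suc k)
    have "lex_argmax f A (Suc k) = maximizers (f k) A"
    proof (rule lex_argmax_Suc_eq_maximizers)
      fix d x y assume "d < k" "x \<in> A" "y \<in> A"
      moreover have "2 \<le> n - d"
        using \<open>d < k\<close> Suc by arith
      ultimately show "f d x = f d y"
        by (simp add: f_def H_def tail_payoff_terminal_balancing_msgs)
    qed
    moreover have "f k = tail_payoff n u H 1"
      using Suc by (simp add: f_def One_nat_def)
    ultimately have "a \<in> lex_argmax f A n"
      using a Suc unfolding tail_payoff_one maximizers_def by simp
    then show ?thesis
      by (simp add: outcome_def lex_choice_def H_def f_def)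
  qed (use a in \<open>simp add: outcome_def lex_choice_def H_def\<close>)
qed

lemma balancing_announcement_optimal:
  fixes n :: nat and A :: "'a set" and u :: "nat \<Rightarrow> 'a \<Rightarrow> real" and t :: "'a hist \<Rightarrow> 'a"
  defines "s \<equiv> balancing_msgs n u A"
  assumes fin: "finite A"
    and max: "\<And>h. h \<in> nodes n A \<Longrightarrow> outcome n s t h \<in> maximizers (tail_payoff n u h (Suc (length h))) A"
    and h: "h \<in> nodes n A" and i: "Suc (length h) = i" "i < n" and q: "q \<in> Pset A"
  shows "payoff n u s t (h @ [q]) i \<le> payoff n u s t (h @ [s i h]) i"
proof -
  define U where "U x = (\<Sum>l=Suc i..n. u l x)" for x
  define V where "V = tail_payoff n u h i"
  define K where "K = sum U A / real (card A)"
  define c where "c = outcome n s t (h @ [q])"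
  define c0 where "c0 = outcome n s t (h @ [s i h])"
  have "h @ [q] \<in> nodes n A"
    using h i q by (auto simp: nodes_def)
  then have c: "c \<in> maximizers (\<lambda>x. U x - q x) A"
    using max[of "h @ [q]"] tail_payoff_snoc[of h "Suc i" n u q] i by (simp add: c_def U_def)
  then have "sum U A \<le> real (card A) * (U c - q c)"
    by (intro Pset_maximizer_above_average[OF fin q]) (auto simp: maximizers_def)
  moreover have "real (card A) > 0"
    using c fin card_gt_0_iff by (fastforce simp: maximizers_def)
  ultimately have K: "K \<le> U c - q c"
    by (simp add: K_def divide_le_eq mult.commute)
  have "terminal n s (h @ [s i h]) = terminal n s h"
    using terminal_snoc[of h n s] i by simp
  then have "c0 = outcome n s t h"
    by (simp add: c0_def outcome_def)
  then have c0: "c0 \<in> maximizers V A"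
    using max[OF h] i by (simp add: V_def)
  then have "U c0 - s i h c0 = K"
    by (simp add: maximizers_def s_def balancing_msgs_def centered_def U_def K_def)
  moreover have "V c \<le> V c0"
    using c c0 by (simp add: maximizers_def)
  ultimately show ?thesis
    using K payoff_after_announcement[of h i n u s t] i by (simp add: c_def c0_def U_def V_def)
qed

lemma SPNE_balancing_msgs:
  assumes n: "2 \<le> n" and fin: "finite A" and vc: "valid_choice n A t"
    and max: "\<And>h. h \<in> nodes n A \<Longrightarrow>
      outcome n (balancing_msgs n u A) t h \<in> maximizers (tail_payoff n u h (Suc (length h))) A"
  shows "SPNE n A u (balancing_msgs n u A) t"
  unfolding SPNE_def
proof (intro conjI valid_msgs_balancing_msgs vc ballI allI impI)
  let ?s = "balancing_msgs n u A"
  fix h assume h: "h \<in> nodes n A"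
  then have hP: "set h \<subseteq> Pset A" and hl: "length h \<le> n - 1"
    by (auto simp: nodes_def)
  fix i \<sigma> assume i: "i \<in> {1..n-1}" and v\<sigma>: "valid_msgs n A (?s(i := \<sigma>))"
  show "payoff n u (?s(i := \<sigma>)) t h i \<le> payoff n u ?s t h i"
  proof (cases "i \<le> length h")
    case True
    then show ?thesis
      using payoff_cong[OF terminal_fun_upd_past[OF True]] by simp
  next
    case False
    define h' where "h' = play ?s (i - 1 - length h) h"
    have h': "h' \<in> nodes n A" "Suc (length h') = i"
      using False i hl set_play_subset_Pset[OF valid_msgs_balancing_msgs hP, of "i - 1 - length h"]
      by (auto simp: h'_def nodes_def)
    have "i < n"
      using i n by auto
    have "\<sigma> h' \<in> Pset A"
      using v\<sigma> h' i unfolding valid_msgs_def nodes_def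
      by (metis (no_types, lifting) diff_Suc_1 fun_upd_same mem_Collect_eq)
    have deviation: "payoff n u (?s(i := \<tau>)) t h i = payoff n u ?s t (h' @ [\<tau> h']) i" for \<tau>
      using terminal_fun_upd_future[of h i n ?s \<tau>] False i by (intro payoff_cong) (simp add: h'_def)
    have "payoff n u ?s t h i = payoff n u ?s t (h' @ [?s i h']) i"
      using deviation[of "?s i"] by simp
    then show ?thesis
      using balancing_announcement_optimal[OF fin max h' \<open>i < n\<close> \<open>\<sigma> h' \<in> Pset A\<close>]
        deviation[of \<sigma>] by simp
  qed
next
  let ?s = "balancing_msgs n u A"
  fix h t' assume h: "h \<in> nodes n A" and vc': "valid_choice n A t'"
  define H where "H = terminal n ?s h"
  have hP: "set h \<subseteq> Pset A" "length h \<le> n - 1"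
    using h by (auto simp: nodes_def)
  have H: "H \<in> nodes n A" "length H = n - 1"
    using set_play_subset_Pset[OF valid_msgs_balancing_msgs hP(1), of "n - 1 - length h"] hP(2)
    by (auto simp: nodes_def H_def terminal_def)
  have terminal_H: "terminal n ?s H = H"
    using H by (simp add: terminal_def)
  have payoff: "payoff n u ?s t'' h n = tail_payoff n u H n (t'' H)" for t''
    using payoff_eq_tail_payoff_diff[of n n u ?s t'' h] n
    by (simp add: outcome_def H_def tail_payoff_Suc_n)
  have "t' H \<in> A"
    using vc' H by (auto simp: valid_choice_def nodes_def)
  then show "payoff n u ?s t' h n \<le> payoff n u ?s t h n"
    using max[OF H(1)] H(2) n payoff[of t] payoff[of t']
    by (simp add: outcome_def terminal_H maximizers_def)
qed

theorem proposition2: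
  fixes n :: nat and A :: "'a set" and u :: "nat \<Rightarrow> 'a \<Rightarrow> real"
  assumes "n \<ge> 2" and "finite A" and "A \<noteq> {}"
  shows "(\<forall>s t. SPNE n A u s t \<longrightarrow> efficient n A u (outcome n s t []))
       \<and> (\<forall>a. efficient n A u a \<longrightarrow> (\<exists>s t. SPNE n A u s t \<and> outcome n s t [] = a))"
proof (intro conjI allI impI)
  fix s t assume spne: "SPNE n A u s t"
  define W where "W = (\<lambda>x. \<Sum>l=1..n. u l x)"
  have root: "[] \<in> nodes n A"
    by (simp add: nodes_def)
  have "outcome n s t [] \<in> maximizers (tail_payoff n u [] 1) A"
    using SPNE_outcome_maximizes_tail_payoff[OF spne assms(1,2) root] by (simp only: list.size(3) One_nat_def)
  then have max: "outcome n s t [] \<in> maximizers W A"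
    by (simp only: tail_payoff_one W_def)
  have "(MAX b\<in>A. W b) = W (outcome n s t [])"
  proof (rule Max_eqI)
    show "finite (W ` A)"
      using assms(2) by simp
    show "W (outcome n s t []) \<in> W ` A" "\<And>y. y \<in> W ` A \<Longrightarrow> y \<le> W (outcome n s t [])"
      using max by (auto simp: maximizers_def)
  qed
  then show "efficient n A u (outcome n s t [])"
    using max by (simp add: efficient_def maximizers_def W_def)
next
  fix a assume a: "efficient n A u a"
  have "SPNE n A u (balancing_msgs n u A) (lex_choice n u A a)"
  proof (rule SPNE_balancing_msgs[OF assms(1,2)])
    show "valid_choice n A (lex_choice n u A a)"
      using valid_choice_lex_choice assms(2,3) .
    fix h assume "h \<in> nodes n A"
    then have "length h < n"
      using assms(1) by (auto simp: nodes_def)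
    then show "outcome n (balancing_msgs n u A) (lex_choice n u A a) h
        \<in> maximizers (tail_payoff n u h (Suc (length h))) A"
      by (rule balancing_outcome_maximizes_tail_payoff[OF assms(2,3)])
  qed
  then show "\<exists>s t. SPNE n A u s t \<and> outcome n s t [] = a"
    using balancing_outcome_Nil[OF assms(2) a] by blast
qed

end
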